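(* Let $G$ be an abelian group with nontrivial torsion subgroup, let $p=p(G)$, and let $A\subseteq G$ with $|A|<\lceil \log_2 p\rceil$. Then there exists a total ordering $\preceq$ of $A$ that is compatible with the group structure of $G$.
   Context: $p(G)$ denotes the smallest cardinality of a nonzero subgroup of $G$. A total order $\preceq$ on $A\subseteq G$ is compatible with the group structure if for all $a,b,c\in A$, $a\preceq b$ implies $a+c\preceq b+c$. *)

theory Defs
  imports Complex_Main
begin

definition add_subgroup :: "'a::ab_group_add set \<Rightarrow> bool" where
  "add_subgroup H \<longleftrightarrow> 0 \<in> H \<and> (\<forall>x\<in>H. \<forall>y\<in>H. x + y \<in> H) \<and> (\<forall>x\<in>H. - x \<in> H)"

definition torsion_subgroup :: "'a::ab_group_add set" where
  "torsion_subgroup = {x. \<exists>n::nat. n > 0 \<and> (\<Sum>i<n. x) = 0}"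

text \<open>A nonzero subgroup of
  smallest cardinality is finite as soon as a finite nonzero subgroup exists,
  which is the case when the torsion subgroup is nontrivial.\<close>
definition pG :: "'a::ab_group_add itself \<Rightarrow> nat" where
  "pG _ = (LEAST n. \<exists>H::'a set. add_subgroup H \<and> H \<noteq> {0} \<and> finite H \<and> card H = n)"

definition compatible_order :: "'a::ab_group_add set \<Rightarrow> 'a rel \<Rightarrow> bool" where
  "compatible_order A r \<longleftrightarrow> linear_order_on A r \<and>
     (\<forall>a\<in>A. \<forall>b\<in>A. \<forall>c\<in>A. a + c \<in> A \<and> b + c \<in> A \<and> (a, b) \<in> r \<longrightarrow> (a + c, b + c) \<in> r)"

end

theory Submission
  imports Defs "HOL-Library.Function_Algebras" "HOL-Library.Indicator_Function"
begin

(*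
  For a \<noteq> b in A, the element v = a - b has infinite order or order at least p(G) > 2^|A|.
  Since \<real>/\<int> is divisible, a character \<chi> with \<chi> v = 1/q for some q > 2^|A| can be built on a
  subgroup containing A by adjoining one generator at a time. For every j, the real function
  frac (j \<chi>) violates each relation x + c = (x + c) inside A by 0 or 1. These relations span a
  space of dimension at most |A|, so two of the multiples j = 0, ..., 2^|A| violate them
  identically, and their difference g is additive on A with g a - g b \<equiv> (j1 - j2)/q \<noteq> 0 mod 1.
  A generic linear combination of such functions is additive and injective on A, and ordering
  A by its values is compatible with the group structure.
*)

definition nmul :: "nat \<Rightarrow> 'a::ab_group_add \<Rightarrow> 'a" where
  "nmul n x = (\<Sum>i<n. x)"

definition zmul :: "int \<Rightarrow> 'a::ab_group_add \<Rightarrow> 'a" where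
  "zmul j x = nmul (nat j) x - nmul (nat (- j)) x"

lemma nmul_0 [simp]: "nmul 0 x = 0"
  by (simp add: nmul_def)

lemma nmul_Suc: "nmul (Suc n) x = x + nmul n x"
  by (simp add: nmul_def add.commute)

lemma nmul_1 [simp]: "nmul 1 x = x"
  by (simp add: nmul_def)

lemma nmul_zero [simp]: "nmul n 0 = 0"
  by (simp add: nmul_def)

lemma nmul_add: "nmul (m + n) x = nmul m x + nmul n x"
  by (induct m) (simp_all add: nmul_Suc add.assoc)

lemma nmul_mult: "nmul (m * n) x = nmul m (nmul n x)"
  by (induct m) (simp_all add: nmul_Suc nmul_add)

lemma nmul_diff: "nmul n (x - y) = nmul n x - nmul n y"
  by (simp add: nmul_def sum_subtractf)

lemma nmul_mod:
  assumes "nmul n x = 0"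
  shows "nmul m x = nmul (m mod n) x"
proof -
  have "nmul m x = nmul (m div n * n + m mod n) x"
    by simp
  also have "\<dots> = nmul (m div n * n) x + nmul (m mod n) x"
    by (rule nmul_add)
  finally show ?thesis
    using assms by (simp add: nmul_mult)
qed

lemma zmul_nat [simp]: "zmul (int n) x = nmul n x"
  by (simp add: zmul_def)

lemma zmul_0 [simp]: "zmul 0 x = 0"
  by (simp add: zmul_def)

lemma zmul_1 [simp]: "zmul 1 x = x"
  by (simp add: zmul_def nmul_def)

lemma zmul_minus: "zmul (- j) x = - zmul j x"
  by (simp add: zmul_def)

lemma zmul_of_nat_diff: "zmul (int m - int n) x = nmul m x - nmul n x"
proof (cases "n \<le> m")
  case True
  then have "nmul m x = nmul (m - n) x + nmul n x"
    using nmul_add[of "m - n" n x] by simp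
  with True show ?thesis by (simp add: zmul_def nat_diff_distrib')
next
  case False
  then have "nmul n x = nmul (n - m) x + nmul m x"
    using nmul_add[of "n - m" m x] by simp
  with False show ?thesis by (simp add: zmul_def nat_diff_distrib')
qed

lemma int_diff_of_nats: obtains m n where "j = int m - int n"
proof
  show "j = int (nat j) - int (nat (- j))" by simp
qed

lemma zmul_add: "zmul (i + j) x = zmul i x + zmul j x"
proof -
  obtain m1 n1 where i: "i = int m1 - int n1" by (rule int_diff_of_nats)
  obtain m2 n2 where j: "j = int m2 - int n2" by (rule int_diff_of_nats)
  have "i + j = int (m1 + m2) - int (n1 + n2)" using i j by simp
  then show ?thesis
    unfolding i j by (simp only: zmul_of_nat_diff nmul_add) (simp add: algebra_simps)
qed

lemma zmul_diff: "zmul (i - j) x = zmul i x - zmul j x"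
  using zmul_add[of i "- j" x] by (simp add: zmul_minus)

lemma zmul_mult: "zmul (i * j) x = zmul i (zmul j x)"
proof -
  obtain m1 n1 where i: "i = int m1 - int n1" by (rule int_diff_of_nats)
  obtain m2 n2 where j: "j = int m2 - int n2" by (rule int_diff_of_nats)
  have "i * j = int (m1 * m2 + n1 * n2) - int (m1 * n2 + n1 * m2)"
    unfolding i j by (simp add: algebra_simps)
  then show ?thesis unfolding i j
    by (simp only: zmul_of_nat_diff nmul_add nmul_mult nmul_diff) (simp add: algebra_simps)
qed

lemma add_subgroup_zero: "add_subgroup K \<Longrightarrow> 0 \<in> K"
  by (simp add: add_subgroup_def)

lemma add_subgroup_add: "add_subgroup K \<Longrightarrow> x \<in> K \<Longrightarrow> y \<in> K \<Longrightarrow> x + y \<in> K"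
  by (simp add: add_subgroup_def)

lemma add_subgroup_uminus: "add_subgroup K \<Longrightarrow> x \<in> K \<Longrightarrow> - x \<in> K"
  by (simp add: add_subgroup_def)

lemma add_subgroup_diff: "add_subgroup K \<Longrightarrow> x \<in> K \<Longrightarrow> y \<in> K \<Longrightarrow> x - y \<in> K"
  unfolding diff_conv_add_uminus by (intro add_subgroup_add add_subgroup_uminus)

lemma add_subgroup_nmul: "add_subgroup K \<Longrightarrow> x \<in> K \<Longrightarrow> nmul n x \<in> K"
  by (induct n) (simp_all add: nmul_Suc add_subgroup_zero add_subgroup_add)

lemma add_subgroup_zmul: "add_subgroup K \<Longrightarrow> x \<in> K \<Longrightarrow> zmul j x \<in> K"
  unfolding zmul_def by (intro add_subgroup_diff add_subgroup_nmul)

lemma add_subgroup_zero_set: "add_subgroup {0}"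
  by (simp add: add_subgroup_def)

lemma least_period_dvd:
  fixes y :: "'a::ab_group_add"
  assumes K: "add_subgroup K" and n0: "0 < n0" "zmul (int n0) y \<in> K"
    and least: "\<And>m. 0 < m \<Longrightarrow> m < n0 \<Longrightarrow> zmul (int m) y \<notin> K"
    and n: "zmul n y \<in> K"
  shows "int n0 dvd n"
proof -
  define r where "r = n mod int n0"
  have r: "0 \<le> r" "r < int n0"
    using n0(1) by (simp_all add: r_def)
  have "zmul n y = zmul (n div int n0) (zmul (int n0) y) + zmul r y"
    unfolding r_def zmul_mult[symmetric] zmul_add[symmetric] by simp
  then have "zmul r y = zmul n y - zmul (n div int n0) (zmul (int n0) y)"
    by (simp add: algebra_simps)
  then have rK: "zmul (int (nat r)) y \<in> K"
    using r(1) add_subgroup_diff[OF K n add_subgroup_zmul[OF K n0(2)]] by simp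
  have "nat r = 0"
  proof (rule ccontr)
    assume "nat r \<noteq> 0"
    with least[of "nat r"] rK r(2) show False
      by simp
  qed
  with r(1) show ?thesis
    by (simp add: r_def dvd_eq_mod_eq_0)
qed

lemma multiples_in_add_subgroup:
  fixes y :: "'a::ab_group_add"
  assumes K: "add_subgroup K"
  obtains (periodic) n0 :: nat where "0 < n0" "\<And>n. zmul n y \<in> K \<longleftrightarrow> int n0 dvd n"
    | (free) "\<And>n. zmul n y \<in> K \<longleftrightarrow> n = 0"
proof (cases "\<exists>n::nat. 0 < n \<and> zmul (int n) y \<in> K")
  case True
  define n0 where "n0 = (LEAST n::nat. 0 < n \<and> zmul (int n) y \<in> K)"
  have n0: "0 < n0" "zmul (int n0) y \<in> K"
    using LeastI_ex[OF True] unfolding n0_def by auto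
  have least: "zmul (int m) y \<notin> K" if "0 < m" "m < n0" for m
    using not_less_Least[of m "\<lambda>n. 0 < n \<and> zmul (int n) y \<in> K"] that unfolding n0_def by blast
  have "zmul n y \<in> K \<longleftrightarrow> int n0 dvd n" for n
  proof
    assume "int n0 dvd n"
    then obtain c where "n = c * int n0"
      by (auto simp: dvd_def mult.commute)
    then have "zmul n y = zmul c (zmul (int n0) y)"
      by (simp only: zmul_mult)
    then show "zmul n y \<in> K"
      using add_subgroup_zmul[OF K n0(2)] by simp
  qed (rule least_period_dvd[OF K n0 least])
  with n0(1) show thesis
    by (rule periodic)
next
  case no_period: False
  have "zmul n y \<in> K \<longleftrightarrow> n = 0" for n
  proof
    assume n: "zmul n y \<in> K"
    have "zmul (int (nat \<bar>n\<bar>)) y \<in> K"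
      using n add_subgroup_uminus[OF K n] by (cases "0 \<le> n") (simp_all add: zmul_minus)
    with no_period have "\<not> 0 < nat \<bar>n\<bar>"
      by metis
    then show "n = 0"
      by simp
  qed (simp add: add_subgroup_zero[OF K])
  then show thesis
    by (rule free)
qed

definition cong_mod1 :: "real \<Rightarrow> real \<Rightarrow> bool" where
  "cong_mod1 u w \<longleftrightarrow> u - w \<in> \<int>"

lemma cong_mod1_refl [simp]: "cong_mod1 u u"
  by (simp add: cong_mod1_def)

lemma cong_mod1_sym: "cong_mod1 u w \<Longrightarrow> cong_mod1 w u"
  unfolding cong_mod1_def by (metis Ints_minus minus_diff_eq)

lemma cong_mod1_trans [trans]: "cong_mod1 u w \<Longrightarrow> cong_mod1 w z \<Longrightarrow> cong_mod1 u z"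
  unfolding cong_mod1_def using Ints_add[of "u - w" "w - z"] by simp

lemma cong_mod1_add: "cong_mod1 u w \<Longrightarrow> cong_mod1 u' w' \<Longrightarrow> cong_mod1 (u + u') (w + w')"
  unfolding cong_mod1_def using Ints_add[of "u - w" "u' - w'"] by (simp add: algebra_simps)

lemma cong_mod1_diff: "cong_mod1 u w \<Longrightarrow> cong_mod1 u' w' \<Longrightarrow> cong_mod1 (u - u') (w - w')"
  unfolding cong_mod1_def using Ints_diff[of "u - w" "u' - w'"] by (simp add: algebra_simps)

lemma cong_mod1_mult_int: "m \<in> \<int> \<Longrightarrow> cong_mod1 u w \<Longrightarrow> cong_mod1 (m * u) (m * w)"
  unfolding cong_mod1_def using Ints_mult[of m "u - w"] by (simp add: algebra_simps)

lemma cong_mod1_frac: "cong_mod1 (frac u) u"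
  by (simp add: cong_mod1_def frac_def)

text \<open>On a subgroup \<open>K\<close>, \<open>character_on K \<chi>\<close> says that \<open>\<chi>\<close> lifts a homomorphism \<open>K \<rightarrow> \<real>/\<int>\<close>.\<close>
definition character_on :: "'a::ab_group_add set \<Rightarrow> ('a \<Rightarrow> real) \<Rightarrow> bool" where
  "character_on K \<chi> \<longleftrightarrow> (\<forall>x\<in>K. \<forall>y\<in>K. cong_mod1 (\<chi> (x + y)) (\<chi> x + \<chi> y))"

lemma character_onD: "character_on K \<chi> \<Longrightarrow> x \<in> K \<Longrightarrow> y \<in> K \<Longrightarrow> cong_mod1 (\<chi> (x + y)) (\<chi> x + \<chi> y)"
  by (simp add: character_on_def)

lemma character_on_subset: "character_on K \<chi> \<Longrightarrow> A \<subseteq> K \<Longrightarrow> character_on A \<chi>"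
  by (auto simp: character_on_def)

lemma character_on_zero:
  assumes K: "add_subgroup K" and \<chi>: "character_on K \<chi>"
  shows "cong_mod1 (\<chi> 0) 0"
proof -
  have "cong_mod1 (\<chi> 0) (\<chi> 0 + \<chi> 0)"
    using character_onD[OF \<chi> add_subgroup_zero[OF K] add_subgroup_zero[OF K]] by simp
  then have "cong_mod1 (\<chi> 0 - \<chi> 0) (\<chi> 0 + \<chi> 0 - \<chi> 0)"
    by (rule cong_mod1_diff) simp
  then show ?thesis
    by (simp add: cong_mod1_sym)
qed

lemma character_on_nmul:
  assumes K: "add_subgroup K" and \<chi>: "character_on K \<chi>" and x: "x \<in> K"
  shows "cong_mod1 (\<chi> (nmul n x)) (real n * \<chi> x)"
proof (induct n)
  case 0
  then show ?case using character_on_zero[OF K \<chi>] by simp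
next
  case (Suc n)
  have "cong_mod1 (\<chi> (x + nmul n x)) (\<chi> x + \<chi> (nmul n x))"
    using character_onD[OF \<chi> x add_subgroup_nmul[OF K x]] .
  also have "cong_mod1 \<dots> (\<chi> x + real n * \<chi> x)"
    using Suc by (intro cong_mod1_add) simp_all
  finally show ?case
    by (simp add: nmul_Suc algebra_simps)
qed

lemma character_on_diff:
  assumes K: "add_subgroup K" and \<chi>: "character_on K \<chi>" and x: "x \<in> K" and y: "y \<in> K"
  shows "cong_mod1 (\<chi> (x - y)) (\<chi> x - \<chi> y)"
proof -
  have "cong_mod1 (\<chi> (x - y + y)) (\<chi> (x - y) + \<chi> y)"
    using character_onD[OF \<chi> add_subgroup_diff[OF K x y] y] .
  then have "cong_mod1 (\<chi> x - \<chi> y) (\<chi> (x - y) + \<chi> y - \<chi> y)"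
    by (intro cong_mod1_diff) simp_all
  then show ?thesis
    by (simp add: cong_mod1_sym)
qed

lemma character_on_zmul:
  assumes K: "add_subgroup K" and \<chi>: "character_on K \<chi>" and x: "x \<in> K"
  shows "cong_mod1 (\<chi> (zmul j x)) (of_int j * \<chi> x)"
proof -
  have "cong_mod1 (\<chi> (zmul j x)) (\<chi> (nmul (nat j) x) - \<chi> (nmul (nat (- j)) x))"
    unfolding zmul_def using K \<chi> x by (intro character_on_diff add_subgroup_nmul)
  also have "cong_mod1 \<dots> (real (nat j) * \<chi> x - real (nat (- j)) * \<chi> x)"
    using K \<chi> x by (intro cong_mod1_diff character_on_nmul)
  also have "real (nat j) * \<chi> x - real (nat (- j)) * \<chi> x = of_int j * \<chi> x"
    by (cases "0 \<le> j") (simp_all add: algebra_simps)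
  finally show ?thesis .
qed

definition adjoin :: "'a::ab_group_add set \<Rightarrow> 'a \<Rightarrow> 'a set" where
  "adjoin K y = {k + zmul j y | k j. k \<in> K}"

lemma subset_adjoin: "K \<subseteq> adjoin K y"
  unfolding adjoin_def by (force intro: exI[of _ 0])

lemma mem_adjoin: "add_subgroup K \<Longrightarrow> y \<in> adjoin K y"
  unfolding adjoin_def by (force intro: exI[of _ 1] add_subgroup_zero)

lemma add_subgroup_adjoin:
  assumes K: "add_subgroup K"
  shows "add_subgroup (adjoin K y)"
  unfolding add_subgroup_def
proof (intro conjI ballI)
  show "0 \<in> adjoin K y"
    using subset_adjoin add_subgroup_zero[OF K] by blast
next
  fix x1 x2 assume "x1 \<in> adjoin K y" "x2 \<in> adjoin K y"
  then obtain k1 j1 k2 j2 where "x1 = k1 + zmul j1 y" "k1 \<in> K" "x2 = k2 + zmul j2 y" "k2 \<in> K"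
    unfolding adjoin_def by blast
  moreover have "x1 + x2 = (k1 + k2) + zmul (j1 + j2) y"
    using calculation by (simp add: zmul_add algebra_simps)
  ultimately show "x1 + x2 \<in> adjoin K y"
    unfolding adjoin_def using add_subgroup_add[OF K] by blast
next
  fix x assume "x \<in> adjoin K y"
  then obtain k j where "x = k + zmul j y" "k \<in> K"
    unfolding adjoin_def by blast
  moreover have "- x = (- k) + zmul (- j) y"
    using calculation by (simp add: zmul_minus)
  ultimately show "- x \<in> adjoin K y"
    unfolding adjoin_def using add_subgroup_uminus[OF K] by blast
qed

text \<open>\<open>\<chi>'(k + j y) = \<chi> k + j t\<close> does not depend modulo 1 on the representation \<open>k + j y\<close>
  as soon as \<open>j t \<equiv> \<chi> (j y)\<close> whenever \<open>j y \<in> K\<close>.\<close>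
definition extend_character :: "'a::ab_group_add set \<Rightarrow> ('a \<Rightarrow> real) \<Rightarrow> 'a \<Rightarrow> real \<Rightarrow> 'a \<Rightarrow> real" where
  "extend_character K \<chi> y t z =
     (case SOME (k, j). k \<in> K \<and> z = k + zmul j y of (k, j) \<Rightarrow> \<chi> k + of_int j * t)"

lemma extend_character_cong:
  assumes K: "add_subgroup K" and \<chi>: "character_on K \<chi>"
    and t: "\<And>n. zmul n y \<in> K \<Longrightarrow> cong_mod1 (of_int n * t) (\<chi> (zmul n y))"
    and k: "k \<in> K"
  shows "cong_mod1 (extend_character K \<chi> y t (k + zmul j y)) (\<chi> k + of_int j * t)"
proof -
  define z where "z = k + zmul j y"
  obtain k0 j0 where kj0: "(SOME (k, j). k \<in> K \<and> z = k + zmul j y) = (k0, j0)"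
    by fastforce
  have "case (k0, j0) of (k', j') \<Rightarrow> k' \<in> K \<and> z = k' + zmul j' y"
    unfolding kj0[symmetric] by (rule someI[of _ "(k, j)"]) (simp add: k z_def)
  then have k0: "k0 \<in> K" and z0: "z = k0 + zmul j0 y"
    by simp_all
  have j: "zmul (j - j0) y = k0 - k"
    using z0 by (simp add: z_def zmul_diff algebra_simps)
  have "cong_mod1 (of_int (j - j0) * t) (\<chi> (k0 - k))"
    using t[of "j - j0"] add_subgroup_diff[OF K k0 k] unfolding j by simp
  also have "cong_mod1 \<dots> (\<chi> k0 - \<chi> k)"
    by (rule character_on_diff[OF K \<chi> k0 k])
  finally have "cong_mod1 (\<chi> k + of_int (j - j0) * t + of_int j0 * t) (\<chi> k + (\<chi> k0 - \<chi> k) + of_int j0 * t)"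
    by (intro cong_mod1_add) simp_all
  moreover have "extend_character K \<chi> y t z = \<chi> k0 + of_int j0 * t"
    unfolding extend_character_def kj0 by simp
  ultimately show ?thesis
    unfolding z_def by (simp add: cong_mod1_sym algebra_simps)
qed

lemma character_on_extend_character:
  assumes K: "add_subgroup K" and \<chi>: "character_on K \<chi>"
    and t: "\<And>n. zmul n y \<in> K \<Longrightarrow> cong_mod1 (of_int n * t) (\<chi> (zmul n y))"
  shows "character_on (adjoin K y) (extend_character K \<chi> y t)"
  unfolding character_on_def
proof (intro ballI)
  let ?\<chi>' = "extend_character K \<chi> y t"
  fix x1 x2 assume "x1 \<in> adjoin K y" "x2 \<in> adjoin K y"
  then obtain k1 j1 k2 j2 where x1: "x1 = k1 + zmul j1 y" "k1 \<in> K"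
    and x2: "x2 = k2 + zmul j2 y" "k2 \<in> K"
    unfolding adjoin_def by blast
  have sum: "x1 + x2 = (k1 + k2) + zmul (j1 + j2) y"
    using x1 x2 by (simp add: zmul_add algebra_simps)
  have "cong_mod1 (?\<chi>' (x1 + x2)) (\<chi> (k1 + k2) + of_int (j1 + j2) * t)"
    unfolding sum by (rule extend_character_cong[OF K \<chi> t add_subgroup_add[OF K x1(2) x2(2)]])
  also have "cong_mod1 \<dots> (\<chi> k1 + \<chi> k2 + of_int (j1 + j2) * t)"
    using character_onD[OF \<chi> x1(2) x2(2)] by (rule cong_mod1_add) simp
  also have "\<chi> k1 + \<chi> k2 + of_int (j1 + j2) * t = (\<chi> k1 + of_int j1 * t) + (\<chi> k2 + of_int j2 * t)"
    by (simp add: algebra_simps)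
  also have "cong_mod1 \<dots> (?\<chi>' x1 + ?\<chi>' x2)"
    unfolding x1(1) x2(1)
    by (intro cong_mod1_add cong_mod1_sym[OF extend_character_cong[OF K \<chi> t]] x1(2) x2(2))
  finally show "cong_mod1 (?\<chi>' (x1 + x2)) (?\<chi>' x1 + ?\<chi>' x2)" .
qed

lemma extend_character_on_base:
  assumes K: "add_subgroup K" and \<chi>: "character_on K \<chi>"
    and t: "\<And>n. zmul n y \<in> K \<Longrightarrow> cong_mod1 (of_int n * t) (\<chi> (zmul n y))"
    and x: "x \<in> K"
  shows "cong_mod1 (extend_character K \<chi> y t x) (\<chi> x)"
  using extend_character_cong[OF K \<chi> t x, of 0] by simp

lemma extend_character_at_generator:
  assumes K: "add_subgroup K" and \<chi>: "character_on K \<chi>"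
    and t: "\<And>n. zmul n y \<in> K \<Longrightarrow> cong_mod1 (of_int n * t) (\<chi> (zmul n y))"
  shows "cong_mod1 (extend_character K \<chi> y t y) t"
proof -
  have "cong_mod1 (extend_character K \<chi> y t y) (\<chi> 0 + t)"
    using extend_character_cong[OF K \<chi> t add_subgroup_zero[OF K], of 1] by simp
  also have "cong_mod1 (\<chi> 0 + t) (0 + t)"
    using character_on_zero[OF K \<chi>] by (rule cong_mod1_add) simp
  finally show ?thesis by simp
qed

lemma character_value_exists:
  assumes K: "add_subgroup K" and \<chi>: "character_on K \<chi>"
  obtains t where "\<And>n. zmul n y \<in> K \<Longrightarrow> cong_mod1 (of_int n * t) (\<chi> (zmul n y))"
  using K proof (cases rule: multiples_in_add_subgroup[where y = y])
  case (periodic n0)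
  have n0K: "zmul (int n0) y \<in> K"
    using periodic(2)[of "int n0"] by simp
  show thesis
  proof (rule that[of "\<chi> (zmul (int n0) y) / real n0"])
    fix n assume "zmul n y \<in> K"
    then have "int n0 dvd n"
      using periodic(2) by simp
    then obtain c where "n = int n0 * c"
      by (elim dvdE)
    then have n: "n = c * int n0"
      by (simp add: mult.commute)
    have "cong_mod1 (\<chi> (zmul n y)) (of_int c * \<chi> (zmul (int n0) y))"
      unfolding n zmul_mult by (rule character_on_zmul[OF K \<chi> n0K])
    moreover have "of_int c * \<chi> (zmul (int n0) y) = of_int n * (\<chi> (zmul (int n0) y) / real n0)"
      using periodic(1) by (simp add: n)
    ultimately show "cong_mod1 (of_int n * (\<chi> (zmul (int n0) y) / real n0)) (\<chi> (zmul n y))"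
      by (simp add: cong_mod1_sym)
  qed
next
  case free
  show thesis
  proof (rule that[of 0])
    fix n assume "zmul n y \<in> K"
    then show "cong_mod1 (of_int n * 0) (\<chi> (zmul n y))"
      using free character_on_zero[OF K \<chi>] by (simp add: cong_mod1_sym)
  qed
qed

lemma character_extends:
  assumes K: "add_subgroup K" and \<chi>: "character_on K \<chi>"
  obtains K' \<chi>' where "add_subgroup K'" "character_on K' \<chi>'" "K \<subseteq> K'" "y \<in> K'"
    "\<And>x. x \<in> K \<Longrightarrow> cong_mod1 (\<chi>' x) (\<chi> x)"
proof -
  obtain t where t: "\<And>n. zmul n y \<in> K \<Longrightarrow> cong_mod1 (of_int n * t) (\<chi> (zmul n y))"
    using character_value_exists[OF K \<chi>, where y = y] by blast
  show thesis
    by (rule that[OF add_subgroup_adjoin[OF K] character_on_extend_character[OF K \<chi> t]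
          subset_adjoin mem_adjoin[OF K, where y = y] extend_character_on_base[OF K \<chi> t]])
qed

lemma character_extends_to_finite:
  assumes "finite S" and K0: "add_subgroup K0" and \<chi>0: "character_on K0 \<chi>0"
  shows "\<exists>K \<chi>. add_subgroup K \<and> character_on K \<chi> \<and> K0 \<subseteq> K \<and> S \<subseteq> K \<and>
           (\<forall>x\<in>K0. cong_mod1 (\<chi> x) (\<chi>0 x))"
  using assms(1)
proof (induct S rule: finite_induct)
  case empty
  show ?case
    using K0 \<chi>0 by (intro exI[of _ K0] exI[of _ \<chi>0]) simp
next
  case (insert y S)
  then obtain K \<chi> where K: "add_subgroup K" "character_on K \<chi>" "K0 \<subseteq> K" "S \<subseteq> K"
    and \<chi>K0: "\<forall>x\<in>K0. cong_mod1 (\<chi> x) (\<chi>0 x)"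
    by blast
  obtain K' \<chi>' where K': "add_subgroup K'" "character_on K' \<chi>'" "K \<subseteq> K'" "y \<in> K'"
    and \<chi>'K: "\<And>x. x \<in> K \<Longrightarrow> cong_mod1 (\<chi>' x) (\<chi> x)"
    using character_extends[OF K(1,2), where y = y] by blast
  have "\<forall>x\<in>K0. cong_mod1 (\<chi>' x) (\<chi>0 x)"
    using \<chi>K0 \<chi>'K K(3) by (blast intro: cong_mod1_trans)
  with K K' show ?case
    by blast
qed

lemma character_with_value:
  fixes v :: "'a::ab_group_add"
  assumes period: "\<And>n. 0 < n \<Longrightarrow> nmul n v = 0 \<Longrightarrow> N < n" and S: "finite S"
  obtains K \<chi> and q :: nat where "add_subgroup K" "character_on K \<chi>" "S \<subseteq> K" "v \<in> K"
    "cong_mod1 (\<chi> v) (1 / real q)" "N < q"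
proof -
  obtain q :: nat where q: "N < q" and dvd: "\<And>n. zmul n v \<in> {0} \<Longrightarrow> int q dvd n"
    using add_subgroup_zero_set proof (cases rule: multiples_in_add_subgroup[where y = v])
    case (periodic n0)
    then have "nmul n0 v = 0"
      using periodic(2)[of "int n0"] by simp
    with periodic show thesis
      using period that by blast
  next
    case free
    then show thesis
      using that[of "N + 1"] by simp
  qed
  have t: "cong_mod1 (of_int n * (1 / real q)) ((\<lambda>_. 0) (zmul n v))" if n: "zmul n v \<in> {0}" for n
  proof -
    obtain c where "n = int q * c"
      using dvd[OF n] by (elim dvdE)
    then show ?thesis
      using q by (simp add: cong_mod1_def)
  qed
  have \<chi>0: "character_on {0} (\<lambda>_. 0 :: real)"
    by (simp add: character_on_def)
  let ?\<chi>1 = "extend_character {0} (\<lambda>_. 0) v (1 / real q)"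
  obtain K \<chi> where K: "add_subgroup K" "character_on K \<chi>" "adjoin {0} v \<subseteq> K" "S \<subseteq> K"
    and \<chi>: "\<forall>x\<in>adjoin {0} v. cong_mod1 (\<chi> x) (?\<chi>1 x)"
    using character_extends_to_finite[OF S add_subgroup_adjoin[OF add_subgroup_zero_set]
        character_on_extend_character[OF add_subgroup_zero_set \<chi>0 t]] by blast
  have v: "v \<in> adjoin {0} v"
    by (rule mem_adjoin[OF add_subgroup_zero_set])
  have "cong_mod1 (\<chi> v) (1 / real q)"
    using \<chi> v extend_character_at_generator[OF add_subgroup_zero_set \<chi>0 t]
    by (blast intro: cong_mod1_trans)
  with K v q show thesis
    using that by blast
qed

definition additive_on :: "'a::ab_group_add set \<Rightarrow> ('a \<Rightarrow> real) \<Rightarrow> bool" where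
  "additive_on A g \<longleftrightarrow> (\<forall>x\<in>A. \<forall>c\<in>A. x + c \<in> A \<longrightarrow> g (x + c) = g x + g c)"

definition dot_on :: "'a set \<Rightarrow> ('a \<Rightarrow> real) \<Rightarrow> ('a \<Rightarrow> real) \<Rightarrow> real" where
  "dot_on A \<rho> g = (\<Sum>z\<in>A. \<rho> z * g z)"

definition relation_vector :: "'a::ab_group_add \<Rightarrow> 'a \<Rightarrow> 'a \<Rightarrow> real" where
  "relation_vector x c = indicator {x} + indicator {c} - indicator {x + c}"

definition relations :: "'a::ab_group_add set \<Rightarrow> ('a \<Rightarrow> real) set" where
  "relations A = {relation_vector x c | x c. x \<in> A \<and> c \<in> A \<and> x + c \<in> A}"

lemma dot_on_indicator: "finite A \<Longrightarrow> x \<in> A \<Longrightarrow> dot_on A (indicator {x}) g = g x"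
  by (simp add: dot_on_def indicator_def if_distrib cong: if_cong)

lemma dot_on_relation_vector:
  assumes A: "finite A" and xc: "x \<in> A" "c \<in> A" "x + c \<in> A"
  shows "dot_on A (relation_vector x c) g = g x + g c - g (x + c)"
proof -
  have "dot_on A (relation_vector x c) g =
      dot_on A (indicator {x}) g + dot_on A (indicator {c}) g - dot_on A (indicator {x + c}) g"
    by (simp add: relation_vector_def dot_on_def ring_distribs sum.distrib sum_subtractf)
  then show ?thesis
    by (simp add: dot_on_indicator[OF A] xc)
qed

lemma dot_on_diff_right: "dot_on A \<rho> (\<lambda>z. g z - h z) = dot_on A \<rho> g - dot_on A \<rho> h"
  by (simp add: dot_on_def algebra_simps sum_subtractf)

lemma additive_on_iff_relations:
  assumes "finite A"
  shows "additive_on A g \<longleftrightarrow> (\<forall>\<rho>\<in>relations A. dot_on A \<rho> g = 0)"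
proof
  assume "additive_on A g"
  then show "\<forall>\<rho>\<in>relations A. dot_on A \<rho> g = 0"
    using assms by (auto simp: additive_on_def relations_def dot_on_relation_vector)
next
  assume rel: "\<forall>\<rho>\<in>relations A. dot_on A \<rho> g = 0"
  show "additive_on A g"
    unfolding additive_on_def
  proof (intro ballI impI)
    fix x c assume xc: "x \<in> A" "c \<in> A" "x + c \<in> A"
    then have "relation_vector x c \<in> relations A"
      unfolding relations_def by blast
    with rel dot_on_relation_vector[OF assms xc, of g] show "g (x + c) = g x + g c"
      by simp
  qed
qed

lemma relations_basis:
  fixes A :: "'a::ab_group_add set"
  assumes A: "finite A"
  obtains B where "B \<subseteq> relations A" "finite B" "card B \<le> card A"
    "\<forall>g. (\<forall>\<rho>\<in>B. dot_on A \<rho> g = 0) \<longrightarrow> additive_on A g"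
proof -
  interpret V: vector_space "\<lambda>r (f :: 'a \<Rightarrow> real) z. r * f z"
    by unfold_locales (auto simp: fun_eq_iff algebra_simps)
  define E where "E = (\<lambda>x. indicator {x} :: 'a \<Rightarrow> real) ` A"
  have span_E: "relations A \<subseteq> V.span E"
  proof
    fix \<rho> assume "\<rho> \<in> relations A"
    then obtain x c where "x \<in> A" "c \<in> A" "x + c \<in> A" and \<rho>: "\<rho> = relation_vector x c"
      unfolding relations_def by blast
    then have "indicator {x} \<in> V.span E" "indicator {c} \<in> V.span E" "indicator {x + c} \<in> V.span E"
      unfolding E_def by (auto intro: V.span_base)
    then show "\<rho> \<in> V.span E"
      unfolding \<rho> relation_vector_def by (intro V.span_diff V.span_add)
  qed
  obtain B where B: "B \<subseteq> relations A" "V.independent B" "relations A \<subseteq> V.span B"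
    using V.maximal_independent_subset by blast
  have E: "finite E" "card E \<le> card A"
    unfolding E_def using A by (simp_all add: card_image_le)
  have "finite B \<and> card B \<le> card E"
    using B(1) span_E by (intro V.independent_span_bound E(1) B(2)) blast
  with E(2) have finB: "finite B" and card: "card B \<le> card A"
    by simp_all
  have "additive_on A g" if g: "\<forall>\<rho>\<in>B. dot_on A \<rho> g = 0" for g
  proof -
    have "V.subspace {\<rho>. dot_on A \<rho> g = 0}"
      unfolding V.subspace_def
      by (simp add: dot_on_def sum.distrib algebra_simps flip: sum_distrib_left)
    then have "V.span B \<subseteq> {\<rho>. dot_on A \<rho> g = 0}"
      using g by (intro V.span_minimal) auto
    with B(3) show ?thesis
      unfolding additive_on_iff_relations[OF A] by blast
  qed
  with B(1) finB card show thesis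
    by (intro that) blast+
qed

lemma frac_add_diff_frac_cases:
  assumes "cong_mod1 w (u + v)"
  shows "frac u + frac v - frac w \<in> {0, 1}"
proof -
  have "cong_mod1 (frac u + frac v - frac w) (u + v - w)"
    by (intro cong_mod1_add cong_mod1_diff cong_mod1_frac)
  moreover have "cong_mod1 (u + v - w) 0"
    using assms by (simp add: cong_mod1_def) (metis Ints_minus minus_diff_eq)
  ultimately have "frac u + frac v - frac w \<in> \<int>"
    unfolding cong_mod1_def using Ints_add by fastforce
  moreover have "-1 < frac u + frac v - frac w" "frac u + frac v - frac w < 2"
    using frac_lt_1[of u] frac_lt_1[of v] frac_lt_1[of w] frac_ge_0[of u] frac_ge_0[of v]
      frac_ge_0[of w] by linarith+
  ultimately show ?thesis
    by (elim Ints_cases) auto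
qed

lemma dot_on_relation_frac_cases:
  assumes A: "finite A" and \<chi>: "character_on A \<chi>" and \<rho>: "\<rho> \<in> relations A"
  shows "dot_on A \<rho> (\<lambda>z. frac (real j * \<chi> z)) \<in> {0, 1}"
proof -
  obtain x c where xc: "x \<in> A" "c \<in> A" "x + c \<in> A" and \<rho>: "\<rho> = relation_vector x c"
    using \<rho> unfolding relations_def by blast
  have "cong_mod1 (real j * \<chi> (x + c)) (real j * \<chi> x + real j * \<chi> c)"
    using cong_mod1_mult_int[OF _ character_onD[OF \<chi> xc(1,2)], of "real j"]
    by (simp add: algebra_simps)
  then show ?thesis
    unfolding \<rho> dot_on_relation_vector[OF A xc] by (rule frac_add_diff_frac_cases)
qed

lemma additive_frac_difference:
  fixes A :: "'a::ab_group_add set"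
  assumes A: "finite A" and \<chi>: "character_on A \<chi>"
  obtains j1 j2 :: nat where "j1 \<le> 2 ^ card A" "j2 \<le> 2 ^ card A" "j1 \<noteq> j2"
    "additive_on A (\<lambda>z. frac (real j1 * \<chi> z) - frac (real j2 * \<chi> z))"
proof -
  obtain B where B: "B \<subseteq> relations A" and finB: "finite B" and cardB: "card B \<le> card A"
    and basis: "\<forall>g. (\<forall>\<rho>\<in>B. dot_on A \<rho> g = 0) \<longrightarrow> additive_on A g"
    by (rule relations_basis[OF A])
  define y where "y j z = frac (real j * \<chi> z)" for j :: nat and z
  define pattern where "pattern j = {\<rho> \<in> B. dot_on A \<rho> (y j) = 1}" for j
  have "\<not> inj_on pattern {..2 ^ card A}"
  proof
    assume inj: "inj_on pattern {..2 ^ card A}"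
    have "card {..2 ^ card A :: nat} \<le> card (Pow B)"
      using card_inj_on_le[OF inj] finB unfolding pattern_def by auto
    also have "\<dots> \<le> 2 ^ card A"
      using finB cardB by (simp add: card_Pow power_increasing)
    finally show False
      by simp
  qed
  then obtain j1 j2 where "j1 \<in> {..2 ^ card A}" "j2 \<in> {..2 ^ card A}" "j1 \<noteq> j2"
    and same: "pattern j1 = pattern j2"
    unfolding inj_on_def by blast
  then have j: "j1 \<le> 2 ^ card A" "j2 \<le> 2 ^ card A" "j1 \<noteq> j2"
    by simp_all
  have "\<forall>\<rho>\<in>B. dot_on A \<rho> (\<lambda>z. y j1 z - y j2 z) = 0"
  proof
    fix \<rho> assume \<rho>: "\<rho> \<in> B"
    have "dot_on A \<rho> (y j1) = 1 \<longleftrightarrow> dot_on A \<rho> (y j2) = 1"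
      using same \<rho> unfolding pattern_def by blast
    moreover have "\<rho> \<in> relations A"
      using \<rho> B by blast
    then have "dot_on A \<rho> (y j) \<in> {0, 1}" for j
      unfolding y_def by (rule dot_on_relation_frac_cases[OF A \<chi>])
    ultimately show "dot_on A \<rho> (\<lambda>z. y j1 z - y j2 z) = 0"
      unfolding dot_on_diff_right by (metis insert_iff singletonD diff_self)
  qed
  with basis have "additive_on A (\<lambda>z. y j1 z - y j2 z)"
    by blast
  from j this[unfolded y_def] show thesis
    by (rule that)
qed

lemma additive_separates_by_character:
  fixes A :: "'a::ab_group_add set"
  assumes A: "finite A" and \<chi>: "character_on A \<chi>"
    and \<chi>ab: "cong_mod1 (\<chi> a - \<chi> b) (1 / real q)" and q: "2 ^ card A < q"
  shows "\<exists>g. additive_on A g \<and> g a \<noteq> g b"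
proof -
  obtain j1 j2 :: nat where j: "j1 \<le> 2 ^ card A" "j2 \<le> 2 ^ card A" "j1 \<noteq> j2"
    and add: "additive_on A (\<lambda>z. frac (real j1 * \<chi> z) - frac (real j2 * \<chi> z))"
    by (rule additive_frac_difference[OF A \<chi>])
  define g where "g z = frac (real j1 * \<chi> z) - frac (real j2 * \<chi> z)" for z
  define d where "d = real j1 - real j2"
  have "cong_mod1 (g a - g b) ((real j1 * \<chi> a - real j2 * \<chi> a) - (real j1 * \<chi> b - real j2 * \<chi> b))"
    unfolding g_def by (intro cong_mod1_diff cong_mod1_frac)
  also have "\<dots> = d * (\<chi> a - \<chi> b)"
    by (simp add: d_def algebra_simps)
  also have "cong_mod1 \<dots> (d * (1 / real q))"
    by (rule cong_mod1_mult_int[OF _ \<chi>ab]) (simp add: d_def)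
  finally have gab: "cong_mod1 (g a - g b) (d / real q)"
    by simp
  have "real j1 \<le> real (2 ^ card A)" "real j2 \<le> real (2 ^ card A)" "real (2 ^ card A) < real q"
    using j(1,2) q by (simp_all only: of_nat_le_iff of_nat_less_iff)
  then have "\<bar>d / real q\<bar> < 1"
    unfolding d_def by (simp add: abs_divide divide_less_eq abs_less_iff)
  moreover have "d / real q \<noteq> 0"
    using j(3) q unfolding d_def by simp
  ultimately have "\<not> cong_mod1 (d / real q) 0"
    unfolding cong_mod1_def using Ints_nonzero_abs_less1 by (metis diff_zero)
  then have "g a \<noteq> g b"
    using cong_mod1_sym[OF gab] by auto
  with add show ?thesis
    unfolding g_def[symmetric] by blast
qed

lemma additive_separates_large_order:
  fixes A :: "'a::ab_group_add set"
  assumes A: "finite A" and ab: "a \<in> A" "b \<in> A"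
    and order: "\<And>n. 0 < n \<Longrightarrow> nmul n (a - b) = 0 \<Longrightarrow> 2 ^ card A < n"
  shows "\<exists>g. additive_on A g \<and> g a \<noteq> g b"
proof -
  obtain K \<chi> q where K: "add_subgroup K" "character_on K \<chi>" "A \<subseteq> K" "a - b \<in> K"
    and \<chi>v: "cong_mod1 (\<chi> (a - b)) (1 / real q)" and q: "2 ^ card A < q"
    by (rule character_with_value[OF order A])
  have "cong_mod1 (\<chi> a - \<chi> b) (\<chi> (a - b))"
    using K(3) ab by (intro cong_mod1_sym[OF character_on_diff[OF K(1,2)]]) auto
  also note \<chi>v
  finally show ?thesis
    by (rule additive_separates_by_character[OF A character_on_subset[OF K(2,3)] _ q])
qed

lemma finite_cyclic_add_subgroup:
  fixes x :: "'a::ab_group_add"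
  assumes x: "x \<noteq> 0" and n: "0 < n" and nx: "nmul n x = 0"
  shows "\<exists>H :: 'a set. add_subgroup H \<and> H \<noteq> {0} \<and> finite H \<and> card H \<le> n"
proof -
  define H where "H = (\<lambda>i. nmul i x) ` {..<n}"
  have mem: "nmul m x \<in> H" for m
    unfolding H_def nmul_mod[OF nx, of m] using n by simp
  have "add_subgroup H"
    unfolding add_subgroup_def
  proof (intro conjI ballI)
    show "0 \<in> H"
      using mem[of 0] by simp
  next
    fix u w assume "u \<in> H" "w \<in> H"
    then obtain i j where "u = nmul i x" "w = nmul j x"
      unfolding H_def by blast
    then show "u + w \<in> H"
      using mem[of "i + j"] by (simp add: nmul_add)
  next
    fix u assume "u \<in> H"
    then obtain i where i: "u = nmul i x" "i < n"
      unfolding H_def by blast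
    have "nmul (n - i) x + nmul i x = 0"
      using i(2) nx nmul_add[of "n - i" i x] by simp
    then have "- u = nmul (n - i) x"
      using i(1) by (simp add: neg_eq_iff_add_eq_0 add.commute)
    then show "- u \<in> H"
      using mem by simp
  qed
  moreover have "H \<noteq> {0}"
    using x mem[of 1, unfolded nmul_1] by blast
  moreover have "finite H" "card H \<le> n"
    unfolding H_def using card_image_le[of "{..<n}"] by simp_all
  ultimately show ?thesis
    by blast
qed

lemma pG_le_period:
  fixes x :: "'a::ab_group_add"
  assumes "x \<noteq> 0" "0 < n" "nmul n x = 0"
  shows "pG TYPE('a) \<le> n"
proof -
  obtain H :: "'a set" where H: "add_subgroup H" "H \<noteq> {0}" "finite H" "card H \<le> n"
    using finite_cyclic_add_subgroup[OF assms] by blast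
  then have "pG TYPE('a) \<le> card H"
    unfolding pG_def by (intro Least_le) blast
  with H(4) show ?thesis
    by simp
qed

lemma pG_pos:
  assumes "torsion_subgroup \<noteq> ({0} :: 'a::ab_group_add set)"
  shows "0 < pG TYPE('a)"
proof -
  have "0 \<in> (torsion_subgroup :: 'a set)"
    unfolding torsion_subgroup_def by (intro CollectI exI[of _ 1]) simp
  with assms obtain x :: 'a where "x \<in> torsion_subgroup" "x \<noteq> 0"
    by blast
  then obtain n where "0 < n" "nmul n x = 0"
    unfolding torsion_subgroup_def nmul_def by blast
  then obtain H0 :: "'a set" where "add_subgroup H0" "H0 \<noteq> {0}" "finite H0"
    using finite_cyclic_add_subgroup[OF \<open>x \<noteq> 0\<close>] by blast
  then have "\<exists>H::'a set. add_subgroup H \<and> H \<noteq> {0} \<and> finite H \<and> card H = card H0"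
    by blast
  then have "\<exists>H::'a set. add_subgroup H \<and> H \<noteq> {0} \<and> finite H \<and> card H = pG TYPE('a)"
    unfolding pG_def by (rule LeastI)
  then obtain H :: "'a set" where "add_subgroup H" "finite H" "card H = pG TYPE('a)"
    by blast
  with add_subgroup_zero[of H] show ?thesis
    by (metis card_gt_0_iff empty_iff)
qed

lemma additive_on_separates_pairs:
  assumes "finite P" and "\<forall>(a, b)\<in>P. \<exists>g. additive_on A g \<and> g a \<noteq> g b"
  shows "\<exists>g. additive_on A g \<and> (\<forall>(a, b)\<in>P. g a \<noteq> g b)"
  using assms
proof (induct P rule: finite_induct)
  case empty
  have "additive_on A (\<lambda>_. 0)"
    by (simp add: additive_on_def)
  then show ?case
    by blast
next
  case (insert ab P)
  obtain a b where ab: "ab = (a, b)"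
    by fastforce
  obtain h where h: "additive_on A h" "\<forall>(x, y)\<in>P. h x \<noteq> h y"
    using insert by auto
  obtain g where g: "additive_on A g" "g a \<noteq> g b"
    using insert(4) ab by auto
  text \<open>\<open>h + t g\<close> can only fail to separate \<open>(x, y)\<close> for \<open>t = (h y - h x) / (g x - g y)\<close>.\<close>
  define E where "E = (\<lambda>(x, y). (h y - h x) / (g x - g y)) ` insert ab P"
  have "finite E"
    unfolding E_def using insert(1) by simp
  then obtain t :: real where t: "t \<notin> E"
    using ex_new_if_finite[OF infinite_UNIV_char_0] by blast
  define G where "G z = h z + t * g z" for z
  have "additive_on A G"
    using h(1) g(1) unfolding additive_on_def G_def by (simp add: algebra_simps)
  moreover have "G x \<noteq> G y" if xy: "(x, y) \<in> insert ab P" for x y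
  proof (cases "g x = g y")
    case True
    then have "(x, y) \<in> P"
      using xy g(2) ab by auto
    with h(2) True show ?thesis
      unfolding G_def by auto
  next
    case False
    have "t \<noteq> (h y - h x) / (g x - g y)"
      using t xy unfolding E_def by force
    with False show ?thesis
      unfolding G_def by (auto simp: field_simps)
  qed
  ultimately show ?case
    by blast
qed

lemma additive_on_injective_exists:
  fixes A :: "'a::ab_group_add set"
  assumes A: "finite A"
    and separating: "\<And>a b. a \<in> A \<Longrightarrow> b \<in> A \<Longrightarrow> a \<noteq> b \<Longrightarrow> \<exists>g. additive_on A g \<and> g a \<noteq> g b"
  shows "\<exists>g. additive_on A g \<and> inj_on g A"
proof -
  have "finite (A \<times> A - Id)"
    using A by simp
  moreover have "\<forall>(a, b)\<in>A \<times> A - Id. \<exists>g. additive_on A g \<and> g a \<noteq> g b"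
    using separating by auto
  ultimately obtain g where "additive_on A g" "\<forall>(a, b)\<in>A \<times> A - Id. g a \<noteq> g b"
    by (blast dest: additive_on_separates_pairs)
  then show ?thesis
    unfolding inj_on_def by auto
qed

lemma compatible_order_of_additive:
  assumes add: "additive_on A g" and inj: "inj_on g A"
  shows "compatible_order A {(x, y). x \<in> A \<and> y \<in> A \<and> g x \<le> g y}"
  unfolding compatible_order_def linear_order_on_def partial_order_on_def preorder_on_def
proof (intro conjI)
  show "antisym {(x, y). x \<in> A \<and> y \<in> A \<and> g x \<le> g y}"
    using inj unfolding antisym_def inj_on_def by auto
qed (use add in \<open>auto simp: refl_on_def trans_def total_on_def additive_on_def\<close>)

theorem lemma3p10:
  fixes A :: "'a::ab_group_add set"
  assumes "torsion_subgroup \<noteq> ({0} :: 'a set)"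
    and "finite A"
    and "int (card A) < \<lceil>log 2 (real (pG TYPE('a)))\<rceil>"
  shows "\<exists>r. compatible_order A r"
proof -
  have "real (card A) < log 2 (real (pG TYPE('a)))"
    using assms(3) by (simp add: less_ceiling_iff)
  then have p: "2 ^ card A < pG TYPE('a)"
    using pG_pos[OF assms(1)] by (simp add: less_log_iff powr_realpow)
  have "\<exists>g. additive_on A g \<and> g a \<noteq> g b" if "a \<in> A" "b \<in> A" "a \<noteq> b" for a b
  proof (rule additive_separates_large_order[OF assms(2) that(1,2)])
    show "2 ^ card A < n" if "0 < n" "nmul n (a - b) = 0" for n
      using pG_le_period[OF _ that] \<open>a \<noteq> b\<close> p by force
  qed
  then obtain g where "additive_on A g" "inj_on g A"
    using additive_on_injective_exists[OF assms(2)] by blast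
  then show ?thesis
    by (blast intro: compatible_order_of_additive)
qed

end
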